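(* Let $(X,\Sigma)$ be a measurable space and let $\mathscr{A}=\{\mathsf{A}_t(\cdot|E)\colon E\in\Sigma,\,t\ge0\}$ be a parametric family of conditional aggregation operators (with paving $\Sigma$ for every $t$). If $\inf_{x\in E}f(x)\le\mathsf{A}_t(f|E)$ for every $f\in\mathbf{F}$, every $t>0$ and every $E\in\Sigma\setminus\{\emptyset\}$, then $\mu_t(\{x\in X\colon f(x)\ge t\})\le\boldsymbol{\mu}_{\mathscr{A}}(f,t)$ for every $t>0$, every $f\in\mathbf{F}\setminus\{0_X\}$ and every family $\boldsymbol{\mu}=(\mu_t)_{t\ge0}$ of monotone measures on $\Sigma$.
   Context: $0_X$ is the zero function on $X$. $\Sigma^0=\Sigma\setminus\{\emptyset\}$. $\mathbf{F}$ denotes the set of all $\Sigma$-measurable, nonnegative, bounded functions $f\colon X\to[0,\infty)$. A monotone measure is a map $\mu\colon\Sigma\to[0,\infty]$ with $\mu(B)\le\mu(C)$ whenever $B\subseteq C$, $\mu(\emptyset)=0$ and $\mu(X)>0$. For $E\in\Sigma^0$, a conditional aggregation operator (CAO) w.r.t. $E$ is a map $\mathsf{A}(\cdot|E)\colon\mathbf{F}\to[0,\infty]$ such that (C1) $\mathsf{A}(f|E)\le\mathsf{A}(g|E)$ whenever $f(x)\le g(x)$ for all $x\in E$, and (C2) $\mathsf{A}(\mathbf{1}_{X\setminus E}|E)=0$. Here $\mathsf{A}_t(\cdot|E)$ is a CAO w.r.t. $E$ for each $t\ge0$ and $E\in\Sigma^0$, and $\mathsf{A}_t(\cdot|\emptyset)=\infty$.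 The generalized level measure is $\boldsymbol{\mu}_{\mathscr{A}}(f,t)=\sup\{\mu_t(E)\colon \mathsf{A}_t(f|E)\ge t,\ E\in\Sigma\}$ for $t\ge0$. *)

theory Defs
  imports "HOL-Analysis.Analysis"
begin

definition bnn_funs :: "'a measure \<Rightarrow> ('a \<Rightarrow> real) set" where
  "bnn_funs M = {f. f \<in> borel_measurable M \<and> (\<forall>x\<in>space M. 0 \<le> f x)
                  \<and> (\<exists>c. \<forall>x\<in>space M. f x \<le> c)}"

definition monotone_measure :: "'a measure \<Rightarrow> ('a set \<Rightarrow> ennreal) \<Rightarrow> bool" where
  "monotone_measure M \<mu> \<longleftrightarrow>
     (\<forall>B\<in>sets M. \<forall>C\<in>sets M. B \<subseteq> C \<longrightarrow> \<mu> B \<le> \<mu> C) \<and> \<mu> {} = 0 \<and> \<mu> (space M) > 0"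

definition is_CAO :: "'a measure \<Rightarrow> 'a set \<Rightarrow> (('a \<Rightarrow> real) \<Rightarrow> ennreal) \<Rightarrow> bool" where
  "is_CAO M E Ag \<longleftrightarrow>
     (\<forall>f\<in>bnn_funs M. \<forall>g\<in>bnn_funs M. (\<forall>x\<in>E. f x \<le> g x) \<longrightarrow> Ag f \<le> Ag g) \<and>
     Ag (indicator (space M - E)) = 0"

text \<open>Parametric family of CAOs: A t E is the operator A_t(.|E); A_t(.|{}) = infinity.\<close>
definition is_param_CAO_family ::
  "'a measure \<Rightarrow> (real \<Rightarrow> 'a set \<Rightarrow> ('a \<Rightarrow> real) \<Rightarrow> ennreal) \<Rightarrow> bool" where
  "is_param_CAO_family M A \<longleftrightarrow>
     (\<forall>t\<ge>0. (\<forall>E\<in>sets M - {{}}. is_CAO M E (A t E)) \<and>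
             (\<forall>f\<in>bnn_funs M. A t {} f = \<infinity>))"

definition gen_level_measure ::
  "'a measure \<Rightarrow> (real \<Rightarrow> 'a set \<Rightarrow> ennreal) \<Rightarrow> (real \<Rightarrow> 'a set \<Rightarrow> ('a \<Rightarrow> real) \<Rightarrow> ennreal)
     \<Rightarrow> ('a \<Rightarrow> real) \<Rightarrow> real \<Rightarrow> ennreal" where
  "gen_level_measure M \<mu> A f t = (SUP E\<in>{E\<in>sets M. A t E f \<ge> ennreal t}. \<mu> t E)"

end

theory Submission
  imports Defs
begin

text \<open>The level set \<open>E = {f \<ge> t}\<close> is itself admissible in the supremum defining
  the generalized level measure: if \<open>E\<close> is empty, \<open>A\<^sub>t(f|E) = \<infinity>\<close>; otherwise
  \<open>A\<^sub>t(f|E) \<ge> inf\<^sub>E f \<ge> t\<close>.  Hence \<open>\<mu>\<^sub>t(E)\<close> is one of the values whose supremum is taken.\<close>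

lemma le_gen_level_measure:
  assumes "E \<in> sets M" and "ennreal t \<le> A t E f"
  shows "\<mu> t E \<le> gen_level_measure M \<mu> A f t"
  unfolding gen_level_measure_def using assms by (intro SUP_upper) auto

lemma level_set_le_INF:
  fixes f :: "'a \<Rightarrow> 'b::conditionally_complete_lattice"
  assumes "{x\<in>S. t \<le> f x} \<noteq> {}"
  shows "t \<le> (INF x\<in>{x\<in>S. t \<le> f x}. f x)"
  by (rule cINF_greatest[OF assms]) simp

lemma aggregation_of_level_set_ge:
  assumes fam: "is_param_CAO_family M A"
    and inf_le: "\<And>E. E \<in> sets M \<Longrightarrow> E \<noteq> {} \<Longrightarrow> ennreal (INF x\<in>E. f x) \<le> A t E f"
    and f: "f \<in> bnn_funs M" and t: "t \<ge> 0"
  shows "ennreal t \<le> A t {x\<in>space M. t \<le> f x} f"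
proof (cases "{x\<in>space M. t \<le> f x} = {}")
  case True
  have "A t {} f = \<infinity>" using fam f t by (simp add: is_param_CAO_family_def)
  then show ?thesis by (subst True) simp
next
  case False
  have "{x\<in>space M. t \<le> f x} \<in> sets M"
    using f by (simp add: bnn_funs_def borel_measurable_iff_ge)
  from level_set_le_INF[OF False]
  have "ennreal t \<le> ennreal (INF x\<in>{x\<in>space M. t \<le> f x}. f x)" by (rule ennreal_leI)
  also have "\<dots> \<le> A t {x\<in>space M. t \<le> f x} f"
    using inf_le[OF \<open>{x\<in>space M. t \<le> f x} \<in> sets M\<close> False] .
  finally show ?thesis .
qed

theorem proposition3p17:
  fixes M :: "'a measure"
    and A :: "real \<Rightarrow> 'a set \<Rightarrow> ('a \<Rightarrow> real) \<Rightarrow> ennreal"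
  assumes fam: "is_param_CAO_family M A"
    and inf_le: "\<And>f t E. f \<in> bnn_funs M \<Longrightarrow> t > 0 \<Longrightarrow> E \<in> sets M \<Longrightarrow> E \<noteq> {} \<Longrightarrow>
                   ennreal (INF x\<in>E. f x) \<le> A t E f"
  shows "\<forall>t>0. \<forall>f\<in>bnn_funs M. (\<exists>x\<in>space M. f x \<noteq> 0) \<longrightarrow>
           (\<forall>\<mu> :: real \<Rightarrow> 'a set \<Rightarrow> ennreal. (\<forall>s\<ge>0. monotone_measure M (\<mu> s)) \<longrightarrow>
              \<mu> t {x\<in>space M. f x \<ge> t} \<le> gen_level_measure M \<mu> A f t)"
proof (intro allI impI ballI)
  fix t :: real and f \<mu>
  assume t: "t > 0" and f: "f \<in> bnn_funs M"
  have "{x\<in>space M. t \<le> f x} \<in> sets M"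
    using f by (simp add: bnn_funs_def borel_measurable_iff_ge)
  moreover have "ennreal t \<le> A t {x\<in>space M. t \<le> f x} f"
    using aggregation_of_level_set_ge[OF fam inf_le[OF f t] f] t by simp
  ultimately show "\<mu> t {x\<in>space M. t \<le> f x} \<le> gen_level_measure M \<mu> A f t"
    by (rule le_gen_level_measure)
qed

end
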